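(* Let $k$ be a field and let $A$ be a just infinite $k$-algebra whose Jacobson radical $J(A)$ is nonzero. Then $A$ has only finitely many prime ideals.
   Context: All rings are associative unital algebras over a field. A $k$-algebra $A$ is called just infinite if $\dim_k(A)=\infty$ and every nonzero two-sided ideal of $A$ has finite codimension in $A$. *)

theory Defs
  imports Main "HOL.Vector_Spaces"
begin

locale k_algebra = vector_space scale
  for scale :: "'k::field \<Rightarrow> 'a::ring_1 \<Rightarrow> 'a" +
  assumes scale_mult_left: "scale c (x * y) = scale c x * y"
      and scale_mult_right: "scale c (x * y) = x * scale c y"

definition two_sided_ideal :: "'a::ring_1 set \<Rightarrow> bool" where
  "two_sided_ideal I \<longleftrightarrow> 0 \<in> I \<and> (\<forall>x\<in>I. \<forall>y\<in>I. x + y \<in> I) \<and> (\<forall>x\<in>I. - x \<in> I)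
     \<and> (\<forall>x\<in>I. \<forall>a. a * x \<in> I \<and> x * a \<in> I)"

definition left_ideal :: "'a::ring_1 set \<Rightarrow> bool" where
  "left_ideal I \<longleftrightarrow> 0 \<in> I \<and> (\<forall>x\<in>I. \<forall>y\<in>I. x + y \<in> I) \<and> (\<forall>x\<in>I. - x \<in> I)
     \<and> (\<forall>x\<in>I. \<forall>a. a * x \<in> I)"

definition maximal_left_ideal :: "'a::ring_1 set \<Rightarrow> bool" where
  "maximal_left_ideal M \<longleftrightarrow> left_ideal M \<and> M \<noteq> UNIV
     \<and> (\<forall>N. left_ideal N \<and> M \<subseteq> N \<and> N \<noteq> UNIV \<longrightarrow> N = M)"

definition jacobson_radical :: "'a::ring_1 set" where
  "jacobson_radical = \<Inter> {M. maximal_left_ideal M}"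

definition prime_ideal :: "'a::ring_1 set \<Rightarrow> bool" where
  "prime_ideal P \<longleftrightarrow> two_sided_ideal P \<and> P \<noteq> UNIV \<and>
     (\<forall>I J. two_sided_ideal I \<longrightarrow> two_sided_ideal J \<longrightarrow>
        (\<forall>x\<in>I. \<forall>y\<in>J. x * y \<in> P) \<longrightarrow> I \<subseteq> P \<or> J \<subseteq> P)"

context k_algebra
begin

definition infinite_dimensional :: bool where
  "infinite_dimensional \<longleftrightarrow> \<not> (\<exists>F. finite F \<and> span F = UNIV)"

text \<open>I has finite codimension: the quotient A/I is finite-dimensional, i.e. it is
  spanned by the images of a finite set F.\<close>
definition finite_codim :: "'a set \<Rightarrow> bool" where
  "finite_codim I \<longleftrightarrow> (\<exists>F. finite F \<and> (\<forall>a. \<exists>s\<in>span F. a - s \<in> I))"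

definition just_infinite :: bool where
  "just_infinite \<longleftrightarrow> infinite_dimensional \<and>
     (\<forall>I. two_sided_ideal I \<and> I \<noteq> {0} \<longrightarrow> finite_codim I)"

end

end

theory Submission
  imports Defs
begin

text \<open>
  If \<open>P\<close> is a prime ideal of finite codimension, pick a left ideal \<open>L\<close> minimal over \<open>P\<close>.
  For \<open>l \<in> L - P\<close> the simple module \<open>L/P = (A l + P)/P \<cong> A/(P : l)\<close> is annihilated by the
  Jacobson radical, so \<open>J L \<subseteq> P\<close> and, \<open>P\<close> being prime, \<open>J \<subseteq> P\<close>. In a just infinite algebra
  every nonzero prime has finite codimension, hence contains \<open>J\<close>; and since \<open>J \<noteq> 0\<close> has finite
  codimension, only finitely many primes contain it: by induction on the codimension of a
  two-sided ideal \<open>I\<close>, either \<open>I\<close> is not prime and every prime above \<open>I\<close> contains one of two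
  strictly larger ideals, or \<open>I\<close> is prime and every two-sided ideal strictly above \<open>I\<close> contains
  the minimal left ideal over \<open>I\<close>.
\<close>

lemma left_ideal_zero: "left_ideal I \<Longrightarrow> 0 \<in> I"
  and left_ideal_add: "left_ideal I \<Longrightarrow> x \<in> I \<Longrightarrow> y \<in> I \<Longrightarrow> x + y \<in> I"
  and left_ideal_minus: "left_ideal I \<Longrightarrow> x \<in> I \<Longrightarrow> - x \<in> I"
  and left_ideal_mult: "left_ideal I \<Longrightarrow> x \<in> I \<Longrightarrow> a * x \<in> I"
  by (simp_all add: left_ideal_def)

lemma left_ideal_UNIV [simp]: "left_ideal UNIV"
  by (simp add: left_ideal_def)

lemma two_sided_ideal_imp_left_ideal: "two_sided_ideal I \<Longrightarrow> left_ideal I"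
  by (simp add: two_sided_ideal_def left_ideal_def)

lemma two_sided_ideal_Inter: "\<forall>T\<in>\<T>. two_sided_ideal T \<Longrightarrow> two_sided_ideal (\<Inter>\<T>)"
  unfolding two_sided_ideal_def Ball_def by (simp add: Inter_iff)

lemma two_sided_ideal_hull: "two_sided_ideal (two_sided_ideal hull S)"
  by (rule hull_in) (rule two_sided_ideal_Inter)

definition left_ideal_adjoin :: "'a::ring_1 \<Rightarrow> 'a set \<Rightarrow> 'a set" where
  "left_ideal_adjoin a M = {b * a + m | b m. m \<in> M}"

definition left_colon :: "'a::ring_1 set \<Rightarrow> 'a \<Rightarrow> 'a set" where
  "left_colon M a = {b. b * a \<in> M}"

text \<open>\<open>L/M\<close> is a simple module.\<close>
definition left_ideal_cover :: "'a::ring_1 set \<Rightarrow> 'a set \<Rightarrow> bool" where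
  "left_ideal_cover M L \<longleftrightarrow> left_ideal M \<and> left_ideal L \<and> M \<subset> L \<and>
     (\<forall>K. left_ideal K \<and> M \<subseteq> K \<and> K \<subseteq> L \<longrightarrow> K = M \<or> K = L)"

lemma left_ideal_mult_right_plus:
  assumes N: "left_ideal N" and M: "left_ideal M"
  shows "left_ideal {n * a + m | n m. n \<in> N \<and> m \<in> M}"
  unfolding left_ideal_def
proof (intro conjI ballI allI)
  show "0 \<in> {n * a + m | n m. n \<in> N \<and> m \<in> M}"
  proof -
    have "0 * a + 0 \<in> {n * a + m | n m. n \<in> N \<and> m \<in> M}"
      using left_ideal_zero[OF N] left_ideal_zero[OF M] by blast
    then show ?thesis by simp
  qed
next
  fix x y assume "x \<in> {n * a + m | n m. n \<in> N \<and> m \<in> M}" "y \<in> {n * a + m | n m. n \<in> N \<and> m \<in> M}"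
  then obtain n m n' m' where "x = n * a + m" "y = n' * a + m'" "n \<in> N" "n' \<in> N" "m \<in> M" "m' \<in> M"
    by blast
  moreover have "x + y = (n + n') * a + (m + m')" using calculation by (simp add: algebra_simps)
  ultimately show "x + y \<in> {n * a + m | n m. n \<in> N \<and> m \<in> M}"
    using left_ideal_add[OF N] left_ideal_add[OF M] by blast
next
  fix x assume "x \<in> {n * a + m | n m. n \<in> N \<and> m \<in> M}"
  then obtain n m where "x = n * a + m" "n \<in> N" "m \<in> M" by blast
  moreover have "- x = (- n) * a + (- m)" using calculation by simp
  ultimately show "- x \<in> {n * a + m | n m. n \<in> N \<and> m \<in> M}"
    using left_ideal_minus[OF N] left_ideal_minus[OF M] by blast
next
  fix x d assume "x \<in> {n * a + m | n m. n \<in> N \<and> m \<in> M}"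
  then obtain n m where "x = n * a + m" "n \<in> N" "m \<in> M" by blast
  moreover have "d * x = (d * n) * a + d * m" using calculation by (simp add: algebra_simps)
  ultimately show "d * x \<in> {n * a + m | n m. n \<in> N \<and> m \<in> M}"
    using left_ideal_mult[OF N] left_ideal_mult[OF M] by blast
qed

lemma left_ideal_left_ideal_adjoin: "left_ideal M \<Longrightarrow> left_ideal (left_ideal_adjoin a M)"
  using left_ideal_mult_right_plus[OF left_ideal_UNIV, of M a] by (simp add: left_ideal_adjoin_def)

lemma subset_left_ideal_adjoin: "M \<subseteq> left_ideal_adjoin a M"
proof
  fix m assume "m \<in> M"
  then have "0 * a + m \<in> left_ideal_adjoin a M" unfolding left_ideal_adjoin_def by blast
  then show "m \<in> left_ideal_adjoin a M" by simp
qed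

lemma mem_left_ideal_adjoin: "left_ideal M \<Longrightarrow> a \<in> left_ideal_adjoin a M"
proof -
  assume "left_ideal M"
  then have "1 * a + 0 \<in> left_ideal_adjoin a M"
    unfolding left_ideal_adjoin_def using left_ideal_zero by blast
  then show ?thesis by simp
qed

lemma left_ideal_adjoin_subset:
  assumes "left_ideal T" "a \<in> T" "M \<subseteq> T"
  shows "left_ideal_adjoin a M \<subseteq> T"
proof
  fix x assume "x \<in> left_ideal_adjoin a M"
  then obtain b m where "x = b * a + m" "m \<in> M" unfolding left_ideal_adjoin_def by blast
  then show "x \<in> T" using assms left_ideal_add left_ideal_mult by blast
qed

lemma left_ideal_left_colon: "left_ideal M \<Longrightarrow> left_ideal (left_colon M a)"
  unfolding left_ideal_def left_colon_def by (simp add: distrib_right mult.assoc)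

lemma left_ideal_coverD:
  assumes "left_ideal_cover M L"
  shows "left_ideal M" "left_ideal L" "M \<subset> L"
    and "left_ideal K \<Longrightarrow> M \<subseteq> K \<Longrightarrow> K \<subseteq> L \<Longrightarrow> K = M \<or> K = L"
  using assms unfolding left_ideal_cover_def by blast+

lemma maximal_left_ideal_iff_cover: "maximal_left_ideal M \<longleftrightarrow> left_ideal_cover M UNIV"
  unfolding maximal_left_ideal_def left_ideal_cover_def by auto

lemma left_ideal_cover_eq_adjoin:
  assumes "left_ideal_cover M L" "a \<in> L" "a \<notin> M"
  shows "left_ideal_adjoin a M = L"
proof -
  note M = left_ideal_coverD(1)[OF assms(1)] and L = left_ideal_coverD(2,3)[OF assms(1)]
  have "left_ideal_adjoin a M \<noteq> M" using mem_left_ideal_adjoin[OF M] assms(3) by blast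
  moreover have "left_ideal_adjoin a M \<subseteq> L"
    using left_ideal_adjoin_subset[OF L(1) assms(2)] L(2) by blast
  ultimately show ?thesis
    using left_ideal_coverD(4)[OF assms(1) left_ideal_left_ideal_adjoin[OF M] subset_left_ideal_adjoin]
    by blast
qed

text \<open>The module isomorphism \<open>A/(M : a) \<cong> (A a + M)/M\<close>, \<open>b \<mapsto> b a\<close>, transports simplicity.\<close>
lemma maximal_left_colon:
  assumes cover: "left_ideal_cover M (left_ideal_adjoin a M)"
  shows "maximal_left_ideal (left_colon M a)"
  unfolding maximal_left_ideal_def
proof (intro conjI allI impI)
  note M = left_ideal_coverD(1)[OF cover]
  show "left_ideal (left_colon M a)" by (rule left_ideal_left_colon[OF M])
  have "a \<notin> M"
    using left_ideal_coverD(3)[OF cover] left_ideal_adjoin_subset[OF M _ order_refl] by blast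
  then have "1 \<notin> left_colon M a" by (simp add: left_colon_def)
  then show "left_colon M a \<noteq> UNIV" by blast
  fix N assume "left_ideal N \<and> left_colon M a \<subseteq> N \<and> N \<noteq> UNIV"
  then have N: "left_ideal N" and colon_N: "left_colon M a \<subseteq> N" and "N \<noteq> UNIV" by auto
  let ?K = "{n * a + m | n m. n \<in> N \<and> m \<in> M}"
  have "left_ideal ?K" by (rule left_ideal_mult_right_plus[OF N M])
  moreover have "M \<subseteq> ?K" using left_ideal_zero[OF N] by force
  moreover have "?K \<subseteq> left_ideal_adjoin a M" unfolding left_ideal_adjoin_def by blast
  ultimately consider "?K = M" | "?K = left_ideal_adjoin a M"
    using left_ideal_coverD(4)[OF cover] by blast
  then show "N = left_colon M a"
  proof cases
    case 1
    then have "N \<subseteq> left_colon M a"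
      using left_ideal_zero[OF M] unfolding left_colon_def by force
    then show ?thesis using colon_N by blast
  next
    case 2
    have "b \<in> N" for b
    proof -
      have "b * a \<in> ?K" using 2 left_ideal_zero[OF M] unfolding left_ideal_adjoin_def by force
      then obtain n m where nm: "b * a = n * a + m" "n \<in> N" "m \<in> M" by blast
      then have "b - n \<in> left_colon M a" by (simp add: left_colon_def algebra_simps)
      then have "(b - n) + n \<in> N" using colon_N left_ideal_add[OF N] nm(2) by blast
      then show ?thesis by simp
    qed
    then show ?thesis using \<open>N \<noteq> UNIV\<close> by blast
  qed
qed

lemma jacobson_radical_mult_cover:
  assumes "t \<in> jacobson_radical" "left_ideal_cover M L" "l \<in> L"
  shows "t * l \<in> M"
proof (cases "l \<in> M")
  case True
  then show ?thesis using left_ideal_mult[OF left_ideal_coverD(1)[OF assms(2)]] by blast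
next
  case False
  then have "left_ideal_adjoin l M = L" by (rule left_ideal_cover_eq_adjoin[OF assms(2,3)])
  then have "maximal_left_ideal (left_colon M l)" using maximal_left_colon assms(2) by metis
  then have "t \<in> left_colon M l" using assms(1) unfolding jacobson_radical_def by blast
  then show ?thesis by (simp add: left_colon_def)
qed

lemma two_sided_ideal_jacobson_radical: "two_sided_ideal (jacobson_radical :: 'a::ring_1 set)"
proof -
  have "x * a \<in> M" if "x \<in> jacobson_radical" "maximal_left_ideal M" for x a :: 'a and M
    using jacobson_radical_mult_cover[OF that(1)] that(2) maximal_left_ideal_iff_cover by blast
  then have right: "x * a \<in> jacobson_radical" if "x \<in> jacobson_radical" for x a :: 'a
    using that unfolding jacobson_radical_def by blast
  have "left_ideal M" if "maximal_left_ideal M" for M :: "'a set"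
    using that by (simp add: maximal_left_ideal_def)
  then have "left_ideal (jacobson_radical :: 'a set)"
    unfolding jacobson_radical_def left_ideal_def Ball_def by (simp add: Inter_iff)
  with right show ?thesis unfolding two_sided_ideal_def left_ideal_def by blast
qed

lemma two_sided_ideal_right_annihilator:
  assumes T: "two_sided_ideal T" and P: "two_sided_ideal P"
  shows "two_sided_ideal {y. \<forall>t\<in>T. t * y \<in> P}"
  unfolding two_sided_ideal_def
proof (intro conjI ballI allI)
  show "0 \<in> {y. \<forall>t\<in>T. t * y \<in> P}" using P by (simp add: two_sided_ideal_def)
  show "x + y \<in> {y. \<forall>t\<in>T. t * y \<in> P}"
    if "x \<in> {y. \<forall>t\<in>T. t * y \<in> P}" "y \<in> {y. \<forall>t\<in>T. t * y \<in> P}" for x y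
    using that P by (simp add: two_sided_ideal_def distrib_left)
  show "- x \<in> {y. \<forall>t\<in>T. t * y \<in> P}" if "x \<in> {y. \<forall>t\<in>T. t * y \<in> P}" for x
    using that P by (simp add: two_sided_ideal_def)
  show "a * x \<in> {y. \<forall>t\<in>T. t * y \<in> P}" if "x \<in> {y. \<forall>t\<in>T. t * y \<in> P}" for x a
    using that T by (simp add: two_sided_ideal_def flip: mult.assoc)
  show "x * a \<in> {y. \<forall>t\<in>T. t * y \<in> P}" if "x \<in> {y. \<forall>t\<in>T. t * y \<in> P}" for x a
    using that P by (simp add: two_sided_ideal_def flip: mult.assoc)
qed

lemma prime_ideal_mult_subsetD:
  assumes "prime_ideal P" "two_sided_ideal T" "\<forall>t\<in>T. \<forall>l\<in>L. t * l \<in> P" "\<not> L \<subseteq> P"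
  shows "T \<subseteq> P"
proof -
  let ?Y = "{y. \<forall>t\<in>T. t * y \<in> P}"
  have "two_sided_ideal ?Y"
    using two_sided_ideal_right_annihilator[OF assms(2)] assms(1) by (simp add: prime_ideal_def)
  moreover have "\<not> ?Y \<subseteq> P" using assms(3,4) by blast
  moreover have "\<forall>t\<in>T. \<forall>y\<in>?Y. t * y \<in> P" by blast
  ultimately show ?thesis using assms(1,2) unfolding prime_ideal_def by blast
qed

lemma jacobson_radical_subset_prime_ideal:
  assumes "prime_ideal P" "left_ideal_cover P L"
  shows "jacobson_radical \<subseteq> P"
proof (rule prime_ideal_mult_subsetD[OF assms(1) two_sided_ideal_jacobson_radical])
  show "\<forall>t\<in>jacobson_radical. \<forall>l\<in>L. t * l \<in> P"
    using jacobson_radical_mult_cover assms(2) by blast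
  show "\<not> L \<subseteq> P" using left_ideal_coverD(3)[OF assms(2)] by blast
qed

lemma prime_ideal_cover_subset:
  assumes P: "prime_ideal P" and cover: "left_ideal_cover P L"
    and T: "two_sided_ideal T" "P \<subset> T"
  shows "L \<subseteq> T"
proof -
  have "\<not> (\<forall>t\<in>T. \<forall>l\<in>L. t * l \<in> P)"
    using prime_ideal_mult_subsetD[OF P T(1)] left_ideal_coverD(3)[OF cover] T(2) by blast
  then obtain t l where "t \<in> T" "l \<in> L" "t * l \<notin> P" by blast
  moreover have "t * l \<in> L" using left_ideal_mult[OF left_ideal_coverD(2)[OF cover] \<open>l \<in> L\<close>] .
  ultimately have "left_ideal_adjoin (t * l) P = L"
    using left_ideal_cover_eq_adjoin[OF cover] by blast
  moreover have "t * l \<in> T" using T(1) \<open>t \<in> T\<close> by (simp add: two_sided_ideal_def)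
  then have "left_ideal_adjoin (t * l) P \<subseteq> T"
    using left_ideal_adjoin_subset[OF two_sided_ideal_imp_left_ideal[OF T(1)]] T(2) by blast
  ultimately show ?thesis by blast
qed

lemma prime_ideals_above_prime_subset:
  assumes "prime_ideal I" "left_ideal_cover I L"
  shows "{P. prime_ideal P \<and> I \<subseteq> P} \<subseteq> insert I {P. prime_ideal P \<and> I \<union> L \<subseteq> P}"
proof
  fix P assume "P \<in> {P. prime_ideal P \<and> I \<subseteq> P}"
  then have P: "prime_ideal P" "I \<subseteq> P" by auto
  have "L \<subseteq> P" if "P \<noteq> I"
    using prime_ideal_cover_subset[OF assms] P that by (simp add: prime_ideal_def psubset_eq)
  then show "P \<in> insert I {P. prime_ideal P \<and> I \<union> L \<subseteq> P}" using P by blast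
qed

lemma prime_ideals_above_nonprime_subset:
  assumes "two_sided_ideal I" "I \<noteq> UNIV" "\<not> prime_ideal I"
  obtains X Y where "\<not> X \<subseteq> I" "\<not> Y \<subseteq> I"
    "{P. prime_ideal P \<and> I \<subseteq> P} \<subseteq>
       {P. prime_ideal P \<and> I \<union> X \<subseteq> P} \<union> {P. prime_ideal P \<and> I \<union> Y \<subseteq> P}"
proof -
  obtain X Y where XY: "two_sided_ideal X" "two_sided_ideal Y" "\<forall>x\<in>X. \<forall>y\<in>Y. x * y \<in> I"
      "\<not> X \<subseteq> I" "\<not> Y \<subseteq> I"
    using assms unfolding prime_ideal_def by blast
  have "X \<subseteq> P \<or> Y \<subseteq> P" if "prime_ideal P" "I \<subseteq> P" for P
  proof -
    have "\<forall>x\<in>X. \<forall>y\<in>Y. x * y \<in> P" using XY(3) that(2) by blast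
    then show ?thesis using that(1) XY(1,2) unfolding prime_ideal_def by blast
  qed
  then show thesis using that[OF XY(4,5)] by blast
qed

context k_algebra
begin

lemma subspace_left_ideal: "left_ideal L \<Longrightarrow> subspace L"
  unfolding subspace_def
proof (intro conjI ballI allI)
  assume L: "left_ideal L"
  show "0 \<in> L" by (rule left_ideal_zero[OF L])
  show "x + y \<in> L" if "x \<in> L" "y \<in> L" for x y by (rule left_ideal_add[OF L that])
  show "scale c x \<in> L" if "x \<in> L" for c x
  proof -
    have "scale c x = scale c 1 * x" by (metis scale_mult_left mult_1)
    then show ?thesis using left_ideal_mult[OF L that] by simp
  qed
qed

lemma dim_strict_mono:
  assumes "subspace U" "subspace W" "U \<subset> W" "W \<subseteq> span F" "finite F"
  shows "dim U < dim W"
proof -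
  obtain B where B: "B \<subseteq> U" "independent B" "U \<subseteq> span B" "card B = dim U"
    using basis_exists by blast
  obtain w where w: "w \<in> W" "w \<notin> U" using assms(3) by blast
  have "span B \<subseteq> U" using span_minimal[OF B(1) assms(1)] .
  then have "independent (insert w B)" using independent_insertI B(2) w(2) by blast
  moreover have "insert w B \<subseteq> W" using B(1) assms(3) w(1) by blast
  ultimately obtain C where C: "insert w B \<subseteq> C" "C \<subseteq> W" "independent C" "W \<subseteq> span C"
    using maximal_independent_subset_extend by metis
  have "finite C" using independent_span_bound[OF assms(5) C(3)] C(2) assms(4) by blast
  moreover have "card C = dim W" using basis_card_eq_dim[OF C(2,4,3)] .
  moreover have "w \<notin> B" using w(2) B(1) by blast
  ultimately have "Suc (card B) \<le> dim W"
    using card_mono[OF _ C(1)] finite_subset[OF _ \<open>finite C\<close>] C(1) by fastforce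
  then show ?thesis using B(4) by simp
qed

text \<open>Every vector is congruent modulo \<open>I\<close> to one in \<open>span F\<close>, so a subspace containing \<open>I\<close>
  is determined by its intersection with \<open>span F\<close>.\<close>
lemma dim_inter_span_strict_mono:
  assumes "subspace S" "subspace T" "S \<subset> T" "I \<subseteq> S" "finite F"
    and codim: "\<forall>a. \<exists>s\<in>span F. a - s \<in> I"
  shows "dim (S \<inter> span F) < dim (T \<inter> span F)"
proof (rule dim_strict_mono)
  show "subspace (S \<inter> span F)" "subspace (T \<inter> span F)"
    using subspace_inter assms(1,2) subspace_span by blast+
  obtain x where x: "x \<in> T" "x \<notin> S" using assms(3) by blast
  obtain s where s: "s \<in> span F" "x - s \<in> I" using codim by blast
  have "x - (x - s) \<in> T" using subspace_diff[OF assms(2) x(1)] s(2) assms(3,4) by blast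
  moreover have "s \<notin> S" using subspace_add[OF assms(1), of s "x - s"] s(2) assms(4) x(2) by auto
  ultimately show "S \<inter> span F \<subset> T \<inter> span F" using s(1) assms(3) by auto
qed (use assms(5) in auto)

lemma left_ideal_cover_exists:
  assumes "left_ideal I" "I \<noteq> UNIV" "finite_codim I"
  obtains L where "left_ideal_cover I L"
proof -
  obtain F where F: "finite F" "\<forall>a. \<exists>s\<in>span F. a - s \<in> I"
    using assms(3) unfolding finite_codim_def by blast
  let ?above = "\<lambda>n. \<exists>L. left_ideal L \<and> I \<subset> L \<and> dim (L \<inter> span F) = n"
  have "?above (dim (UNIV \<inter> span F))" using assms(2) left_ideal_UNIV by blast
  then obtain n where n: "?above n" "\<forall>m<n. \<not> ?above m" using exists_least_iff[of ?above] by blast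
  then obtain L where L: "left_ideal L" "I \<subset> L" "dim (L \<inter> span F) = n" by blast
  have "K = I \<or> K = L" if K: "left_ideal K" "I \<subseteq> K" "K \<subseteq> L" for K
  proof (rule ccontr)
    assume "\<not> (K = I \<or> K = L)"
    then have "K \<subset> L" "I \<subset> K" using K by auto
    then have "dim (K \<inter> span F) < n"
      using dim_inter_span_strict_mono[OF subspace_left_ideal[OF K(1)] subspace_left_ideal[OF L(1)]
          _ K(2) F] L(3) by simp
    moreover have "?above (dim (K \<inter> span F))" using K(1) \<open>I \<subset> K\<close> by blast
    ultimately show False using n(2) by blast
  qed
  then have "left_ideal_cover I L" using assms(1) L(1,2) by (simp add: left_ideal_cover_def)
  then show thesis by (rule that)
qed

lemma jacobson_radical_subset_finite_codim_prime:
  assumes "prime_ideal P" "finite_codim P"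
  shows "jacobson_radical \<subseteq> P"
proof -
  have "left_ideal P" "P \<noteq> UNIV"
    using assms(1) two_sided_ideal_imp_left_ideal by (auto simp: prime_ideal_def)
  then obtain L where "left_ideal_cover P L" using left_ideal_cover_exists assms(2) by blast
  then show ?thesis using jacobson_radical_subset_prime_ideal[OF assms(1)] by blast
qed

lemma finite_prime_ideals_above:
  assumes "finite F" "\<forall>a. \<exists>s\<in>span F. a - s \<in> I" "two_sided_ideal I"
  shows "finite {P. prime_ideal P \<and> I \<subseteq> P}"
  using assms(2,3)
proof (induction "card F - dim (I \<inter> span F)" arbitrary: I rule: less_induct)
  case less
  note codim = less.prems(1) and I = less.prems(2)
  have larger: "finite {P. prime_ideal P \<and> I \<union> X \<subseteq> P}" if "\<not> X \<subseteq> I" for X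
  proof -
    let ?I' = "two_sided_ideal hull (I \<union> X)"
    have I': "two_sided_ideal ?I'" by (rule two_sided_ideal_hull)
    have "I \<subset> ?I'" using hull_subset[of "I \<union> X"] that by blast
    have "dim (I \<inter> span F) < dim (?I' \<inter> span F)"
      by (rule dim_inter_span_strict_mono[OF subspace_left_ideal subspace_left_ideal
            \<open>I \<subset> ?I'\<close> order_refl assms(1) codim])
        (use two_sided_ideal_imp_left_ideal I I' in blast)+
    moreover have "dim (?I' \<inter> span F) \<le> card F" by (rule dim_le_card[OF _ assms(1)]) blast
    ultimately have "card F - dim (?I' \<inter> span F) < card F - dim (I \<inter> span F)" by linarith
    moreover have "\<forall>a. \<exists>s\<in>span F. a - s \<in> ?I'" using codim \<open>I \<subset> ?I'\<close> by blast
    ultimately have "finite {P. prime_ideal P \<and> ?I' \<subseteq> P}" using I' by (rule less.hyps)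
    moreover have "{P. prime_ideal P \<and> I \<union> X \<subseteq> P} \<subseteq> {P. prime_ideal P \<and> ?I' \<subseteq> P}"
      using hull_minimal[of "I \<union> X" _ two_sided_ideal] by (auto simp: prime_ideal_def)
    ultimately show ?thesis by (rule finite_subset[rotated])
  qed
  consider "I = UNIV" | "prime_ideal I" | "I \<noteq> UNIV" "\<not> prime_ideal I" by blast
  then show ?case
  proof cases
    case 1
    then have "{P. prime_ideal P \<and> I \<subseteq> P} = {}" by (auto simp: prime_ideal_def)
    then show ?thesis by (metis finite.emptyI)
  next
    case 2
    have "finite_codim I" unfolding finite_codim_def using codim assms(1) by blast
    moreover have "left_ideal I" "I \<noteq> UNIV"
      using 2 two_sided_ideal_imp_left_ideal by (auto simp: prime_ideal_def)
    ultimately obtain L where L: "left_ideal_cover I L" using left_ideal_cover_exists by blast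
    then have "\<not> L \<subseteq> I" using left_ideal_coverD(3) by blast
    then have "finite (insert I {P. prime_ideal P \<and> I \<union> L \<subseteq> P})" using larger by simp
    then show ?thesis by (rule finite_subset[OF prime_ideals_above_prime_subset[OF 2 L]])
  next
    case 3
    then obtain X Y where "\<not> X \<subseteq> I" "\<not> Y \<subseteq> I" and primes:
      "{P. prime_ideal P \<and> I \<subseteq> P} \<subseteq>
         {P. prime_ideal P \<and> I \<union> X \<subseteq> P} \<union> {P. prime_ideal P \<and> I \<union> Y \<subseteq> P}"
      using prime_ideals_above_nonprime_subset[OF I] by blast
    then have "finite ({P. prime_ideal P \<and> I \<union> X \<subseteq> P} \<union> {P. prime_ideal P \<and> I \<union> Y \<subseteq> P})"
      using larger by simp
    then show ?thesis by (rule finite_subset[OF primes])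
  qed
qed

end

theorem proposition2p1:
  fixes scale :: "'k::field \<Rightarrow> 'a::ring_1 \<Rightarrow> 'a"
  assumes "k_algebra scale"
    and "k_algebra.just_infinite scale"
    and "(jacobson_radical :: 'a set) \<noteq> {0}"
  shows "finite {P :: 'a set. prime_ideal P}"
proof -
  interpret k_algebra scale by (rule assms(1))
  let ?J = "jacobson_radical :: 'a set"
  have ideals_finite_codim: "finite_codim I" if "two_sided_ideal I" "I \<noteq> {0}" for I
    using assms(2) that unfolding just_infinite_def by blast
  then obtain F where "finite F" "\<forall>a. \<exists>s\<in>span F. a - s \<in> ?J"
    using two_sided_ideal_jacobson_radical assms(3) unfolding finite_codim_def by blast
  then have "finite {P. prime_ideal P \<and> ?J \<subseteq> P}"
    using finite_prime_ideals_above two_sided_ideal_jacobson_radical by blast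
  moreover have "?J \<subseteq> P" if "prime_ideal P" "P \<noteq> {0}" for P
    using jacobson_radical_subset_finite_codim_prime ideals_finite_codim that
    by (simp add: prime_ideal_def)
  then have "{P. prime_ideal P} \<subseteq> insert {0} {P. prime_ideal P \<and> ?J \<subseteq> P}" by blast
  ultimately show ?thesis by (simp add: finite_subset)
qed

end
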